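(* Let $n\geq2$ and $d\geq0$. Any solution $u:(d,\infty)\to\mathbb{R}^+$ of $$u''(x)=\Big[\frac{xu'(x)-u(x)}{2}+\frac{n-1}{u(x)}\Big]\big(1+(u'(x))^2\big)$$ satisfies, for some constant $\sigma=\sigma(u)\geq0$, the identity $$u(x)=2(n-1)x\int_x^\infty\frac{1}{t^2}\bigg\{\int_t^\infty\frac{s}{2}\,\frac{1+(u'(s))^2}{u(s)}\,e^{-\frac12\int_t^s z(1+(u'(z))^2)\,dz}\,ds\bigg\}dt+\sigma x$$ for all $x\in(d,\infty)$. *)

theory Defs
  imports "HOL-Analysis.Analysis"
begin

end

theory Submission
  imports Defs "HOL-Real_Asymp.Real_Asymp"
begin

text \<open>Let \<open>I s = u s - s u' s\<close> (\<open>intercept\<close>) be the height at which the tangent line at \<open>s\<close>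
  meets the axis, and \<open>W\<^sub>t s = exp (- 1/2 \<integral>\<^sub>t\<^sup>s z (1 + u'\<^sup>2))\<close> (\<open>weight t\<close>). The ODE gives
  \<open>(I W\<^sub>t)' = - 2 (n - 1) k\<^sub>t\<close>, with \<open>k\<^sub>t\<close> (\<open>density t\<close>) the inner integrand. \<open>I \<ge> 0\<close>: a negative intercept turns the ODE into a Riccati
  inequality \<open>u'' \<ge> c (1 + u'\<^sup>2)\<close>, which blows up in finite time. \<open>I W\<^sub>t \<rightarrow> 0\<close>: otherwise \<open>I\<close>
  grows like \<open>exp (s\<^sup>2 / 4)\<close> and \<open>(u / s)' = - I / s\<^sup>2\<close> drives \<open>u / s\<close> below zero. Hence
  \<open>\<integral>\<^sub>t\<^sup>\<infinity> k\<^sub>t = I t / (2 (n - 1))\<close>, and since \<open>u / s\<close> decreases to some \<open>\<sigma> \<ge> 0\<close>, integrating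
  \<open>- (u / s)' = I / s\<^sup>2\<close> over \<open>[x, \<infinity>)\<close> gives the representation.\<close>

lemma has_integral_atLeast_of_derivative:
  fixes G g :: "real \<Rightarrow> real"
  assumes cont: "\<And>b. continuous_on {a..b} G"
    and deriv: "\<And>x. a < x \<Longrightarrow> (G has_real_derivative g x) (at x)"
    and nonneg: "\<And>x. a \<le> x \<Longrightarrow> 0 \<le> g x"
    and lim: "(G \<longlongrightarrow> L) at_top"
  shows "(g has_integral (L - G a)) {a..}"
proof -
  have ftc: "(g has_integral (G b - G a)) {a..b}" if "a \<le> b" for b
    using that cont deriv
    by (intro fundamental_theorem_of_calculus_interior)
      (auto simp: has_real_derivative_iff_has_vector_derivative[symmetric])
  show ?thesis
  proof (rule has_integral_to_inf)
    show "g integrable_on {a..b}" for b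
      by (cases "a \<le> b") (use ftc in auto)
    have "\<forall>\<^sub>F b in at_top. integral {a..b} g = G b - G a"
      using eventually_ge_at_top[of a] by eventually_elim (use ftc in \<open>auto intro: integral_unique\<close>)
    moreover have "((\<lambda>b. G b - G a) \<longlongrightarrow> L - G a) at_top"
      by (intro tendsto_intros lim)
    ultimately show "((\<lambda>b. integral {a..b} g) \<longlongrightarrow> L - G a) at_top"
      by (simp add: tendsto_cong)
  qed (use nonneg in auto)
qed

lemma integral_has_real_derivative_interior:
  fixes g :: "real \<Rightarrow> real"
  assumes "continuous_on {a..} g" and "a < x"
  shows "((\<lambda>y. integral {a..y} g) has_real_derivative g x) (at x)"
proof -
  have "at x within {a..x+1} = at x"
    using \<open>a < x\<close> by (intro at_within_interior) simp
  moreover have "continuous_on {a..x+1} g"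
    using assms(1) by (rule continuous_on_subset) auto
  ultimately show ?thesis
    using integral_has_real_derivative[of a "x+1" g x] \<open>a < x\<close> by simp
qed

text \<open>Along a solution of \<open>v' \<ge> c (1 + v\<^sup>2)\<close> the function \<open>arctan v\<close> grows at rate at least \<open>c\<close>,
  but its total variation is less than \<open>pi\<close>.\<close>

lemma riccati_interval_bound:
  fixes v v' :: "real \<Rightarrow> real"
  assumes "c > 0" and "a \<le> b"
    and deriv: "\<And>x. x \<in> {a..b} \<Longrightarrow> (v has_real_derivative v' x) (at x)"
    and riccati: "\<And>x. x \<in> {a..b} \<Longrightarrow> c * (1 + (v x)\<^sup>2) \<le> v' x"
  shows "c * (b - a) < pi"
proof -
  have "arctan (v a) - c * a \<le> arctan (v b) - c * b"
  proof (rule deriv_nonneg_imp_mono[OF _ _ \<open>a \<le> b\<close>])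
    fix x assume x: "x \<in> {a..b}"
    show "((\<lambda>x. arctan (v x) - c * x) has_real_derivative
        (inverse (1 + (v x)\<^sup>2) * v' x - c)) (at x)"
      by (rule derivative_eq_intros DERIV_chain2[OF DERIV_arctan] deriv[OF x] refl)+ simp
    have "0 < 1 + (v x)\<^sup>2" by (simp add: add_pos_nonneg)
    then show "0 \<le> inverse (1 + (v x)\<^sup>2) * v' x - c"
      using riccati[OF x] by (simp add: field_simps)
  qed
  moreover have "arctan (v b) - arctan (v a) < pi"
    using arctan_bounded[of "v b"] arctan_bounded[of "v a"] by simp
  ultimately show ?thesis by (simp add: algebra_simps)
qed

lemma derivative_le_neg_imp_nonpos:
  fixes q q' :: "real \<Rightarrow> real"
  assumes "c > 0"
    and deriv: "\<And>x. a \<le> x \<Longrightarrow> (q has_real_derivative q' x) (at x)"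
    and bound: "\<And>x. a \<le> x \<Longrightarrow> q' x \<le> - c"
  shows "\<exists>x\<ge>a. q x \<le> 0"
proof -
  define x where "x = a + max 0 (q a) / c"
  have "a \<le> x" using \<open>c > 0\<close> by (simp add: x_def)
  have "q x + c * x \<le> q a + c * a"
  proof (rule DERIV_nonpos_imp_nonincreasing[OF \<open>a \<le> x\<close>])
    fix y assume "a \<le> y" "y \<le> x"
    have "((\<lambda>y. q y + c * y) has_real_derivative q' y + c) (at y)" "q' y + c \<le> 0"
      using deriv[OF \<open>a \<le> y\<close>] bound[OF \<open>a \<le> y\<close>] by (auto intro!: derivative_eq_intros)
    then show "\<exists>l. ((\<lambda>y. q y + c * y) has_real_derivative l) (at y) \<and> l \<le> 0"
      by blast
  qed
  then have "q x \<le> q a - max 0 (q a)"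
    using \<open>c > 0\<close> by (simp add: x_def algebra_simps)
  with \<open>a \<le> x\<close> show ?thesis by (intro exI[of _ x]) auto
qed

locale shrinker_profile =
  fixes n :: nat and d :: real and u u' u'' :: "real \<Rightarrow> real"
  assumes n_ge_2: "n \<ge> 2" and d_nonneg: "d \<ge> 0"
    and u_pos: "\<And>x. x > d \<Longrightarrow> u x > 0"
    and u_deriv: "\<And>x. x > d \<Longrightarrow> (u has_real_derivative u' x) (at x)"
    and u'_deriv: "\<And>x. x > d \<Longrightarrow> (u' has_real_derivative u'' x) (at x)"
    and ode: "\<And>x. x > d \<Longrightarrow>
       u'' x = ((x * u' x - u x) / 2 + (real n - 1) / u x) * (1 + (u' x)\<^sup>2)"
begin

definition intercept :: "real \<Rightarrow> real" where
  "intercept s = u s - s * u' s"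

definition weight :: "real \<Rightarrow> real \<Rightarrow> real" where
  "weight t s = exp (- (1/2) * integral {t..s} (\<lambda>z. z * (1 + (u' z)\<^sup>2)))"

definition density :: "real \<Rightarrow> real \<Rightarrow> real" where
  "density t s = s / 2 * ((1 + (u' s)\<^sup>2) / u s) * weight t s"

definition weighted_intercept :: "real \<Rightarrow> real \<Rightarrow> real" where
  "weighted_intercept t s = intercept s * weight t s / (2 * (real n - 1))"

lemma n_minus_1_pos: "real n - 1 > 0"
  using n_ge_2 by simp

lemma continuous_on_u: "d < a \<Longrightarrow> continuous_on {a..} u"
  by (intro continuous_at_imp_continuous_on ballI DERIV_isCont[OF u_deriv]) auto

lemma continuous_on_u': "d < a \<Longrightarrow> continuous_on {a..} u'"
  by (intro continuous_at_imp_continuous_on ballI DERIV_isCont[OF u'_deriv]) auto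

lemma intercept_has_derivative: "d < s \<Longrightarrow> (intercept has_real_derivative - s * u'' s) (at s)"
  unfolding intercept_def by (auto intro!: derivative_eq_intros u_deriv u'_deriv)

lemma weight_pos: "0 < weight t s"
  by (simp add: weight_def)

lemma weight_self: "weight t t = 1"
  by (simp add: weight_def)

lemma weight_has_derivative:
  assumes "d < t" and "t < s"
  shows "(weight t has_real_derivative - (s / 2) * (1 + (u' s)\<^sup>2) * weight t s) (at s)"
proof -
  have "continuous_on {t..} (\<lambda>z. z * (1 + (u' z)\<^sup>2))"
    using continuous_on_u'[OF \<open>d < t\<close>] by (intro continuous_intros)
  from integral_has_real_derivative_interior[OF this \<open>t < s\<close>] show ?thesis
    unfolding weight_def by (auto intro!: derivative_eq_intros)
qed

lemma continuous_on_weight: "d < t \<Longrightarrow> continuous_on {t..b} (weight t)"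
  unfolding weight_def
  by (intro continuous_intros indefinite_integral_continuous_1 integrable_continuous_real
      continuous_on_subset[OF continuous_on_u'[of t]]) auto

lemma weight_le:
  assumes "d < t" and "t \<le> s"
  shows "weight t s \<le> exp (- (s\<^sup>2 - t\<^sup>2) / 4)"
proof -
  have "continuous_on {t..s} (\<lambda>z. z * (1 + (u' z)\<^sup>2))"
    by (intro continuous_intros continuous_on_subset[OF continuous_on_u'[of t]]) (use assms in auto)
  then have "integral {t..s} (\<lambda>z. z) \<le> integral {t..s} (\<lambda>z. z * (1 + (u' z)\<^sup>2))"
    using assms d_nonneg by (intro integral_le integrable_continuous_real ident_integrable_on) auto
  with \<open>t \<le> s\<close> show ?thesis
    unfolding weight_def by simp
qed

text \<open>The weight is chosen so that the \<open>(x u' - u) / 2\<close> term of the ODE cancels.\<close>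

lemma weighted_intercept_has_derivative:
  assumes "d < t" and "t < s"
  shows "(weighted_intercept t has_real_derivative - density t s) (at s)"
proof -
  have "d < s" using assms by simp
  have "((\<lambda>s. intercept s * weight t s) has_real_derivative
      - s * u'' s * weight t s + - (s / 2) * (1 + (u' s)\<^sup>2) * weight t s * intercept s) (at s)"
    using assms by (intro DERIV_mult intercept_has_derivative weight_has_derivative) auto
  then have "(weighted_intercept t has_real_derivative
      (- s * u'' s * weight t s + - (s / 2) * (1 + (u' s)\<^sup>2) * weight t s * intercept s)
        / (2 * (real n - 1))) (at s)"
    unfolding weighted_intercept_def by (rule DERIV_cdivide)
  moreover have "(- s * u'' s * weight t s + - (s / 2) * (1 + (u' s)\<^sup>2) * weight t s * intercept s)
        / (2 * (real n - 1)) = - density t s"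
    using n_minus_1_pos u_pos[OF \<open>d < s\<close>]
    unfolding ode[OF \<open>d < s\<close>] density_def intercept_def by (simp add: field_simps)
  ultimately show ?thesis by simp
qed

lemma continuous_on_weighted_intercept: "d < t \<Longrightarrow> continuous_on {t..b} (weighted_intercept t)"
  unfolding weighted_intercept_def intercept_def
  by (intro continuous_intros continuous_on_weight
      continuous_on_subset[OF continuous_on_u[of t]] continuous_on_subset[OF continuous_on_u'[of t]])
    (use n_ge_2 in auto)

lemma density_pos: "d < t \<Longrightarrow> t \<le> s \<Longrightarrow> 0 < density t s"
  using u_pos[of s] d_nonneg weight_pos[of t s] by (simp add: density_def add_pos_nonneg)

lemma weighted_intercept_antimono:
  assumes "d < t" and "t \<le> a" and "a \<le> b"
  shows "weighted_intercept t b \<le> weighted_intercept t a"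
proof (rule DERIV_nonpos_imp_decreasing_open[OF \<open>a \<le> b\<close>])
  fix x assume "a < x" "x < b"
  then show "\<exists>l. (weighted_intercept t has_real_derivative l) (at x) \<and> l \<le> 0"
    using assms weighted_intercept_has_derivative[of t x] density_pos[of t x]
    by (intro exI[of _ "- density t x"]) auto
qed (use assms in \<open>auto intro: continuous_on_subset[OF continuous_on_weighted_intercept]\<close>)

lemma weight_le_1:
  assumes "d < t" and "t \<le> s"
  shows "weight t s \<le> 1"
proof -
  have "t\<^sup>2 \<le> s\<^sup>2" using assms d_nonneg by (intro power_mono) auto
  then have "exp (- (s\<^sup>2 - t\<^sup>2) / 4) \<le> 1" by simp
  then show ?thesis using weight_le[OF assms] by linarith
qed

lemma intercept_le_if_nonpos:
  assumes "d < s\<^sub>0" and "s\<^sub>0 \<le> s" and "intercept s\<^sub>0 \<le> 0"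
  shows "intercept s \<le> intercept s\<^sub>0"
proof -
  have "weighted_intercept s\<^sub>0 s \<le> weighted_intercept s\<^sub>0 s\<^sub>0"
    using assms by (intro weighted_intercept_antimono) auto
  then have le: "intercept s * weight s\<^sub>0 s \<le> intercept s\<^sub>0"
    using n_minus_1_pos by (simp add: weighted_intercept_def weight_self divide_le_cancel)
  show ?thesis
  proof (cases "intercept s \<le> 0")
    case True
    then have "intercept s \<le> intercept s * weight s\<^sub>0 s"
      using weight_le_1[OF assms(1,2)] by (simp add: mult_le_cancel_left1)
    with le show ?thesis by simp
  next
    case False
    then have "0 < intercept s * weight s\<^sub>0 s" using weight_pos by simp
    with le \<open>intercept s\<^sub>0 \<le> 0\<close> show ?thesis by simp
  qed
qed

lemma intercept_nonneg:
  assumes "d < s\<^sub>0"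
  shows "0 \<le> intercept s\<^sub>0"
proof (rule ccontr)
  assume "\<not> 0 \<le> intercept s\<^sub>0"
  define c where "c = - intercept s\<^sub>0"
  have "c > 0" using \<open>\<not> 0 \<le> intercept s\<^sub>0\<close> by (simp add: c_def)
  have "c / 2 * (s\<^sub>0 + 2 * pi / c - s\<^sub>0) < pi"
  proof (rule riccati_interval_bound[where v = u' and v' = u''])
    fix x assume x: "x \<in> {s\<^sub>0..s\<^sub>0 + 2 * pi / c}"
    then have "d < x" using assms by simp
    show "(u' has_real_derivative u'' x) (at x)" using u'_deriv[OF \<open>d < x\<close>] .
    have "c / 2 \<le> (x * u' x - u x) / 2"
      using intercept_le_if_nonpos[OF assms, of x] x \<open>c > 0\<close> by (simp add: intercept_def c_def)
    moreover have "0 \<le> (real n - 1) / u x"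
      using n_minus_1_pos u_pos[OF \<open>d < x\<close>] by simp
    ultimately have "c / 2 \<le> (x * u' x - u x) / 2 + (real n - 1) / u x"
      by linarith
    then show "c / 2 * (1 + (u' x)\<^sup>2) \<le> u'' x"
      unfolding ode[OF \<open>d < x\<close>] by (intro mult_right_mono) auto
  qed (use \<open>c > 0\<close> in auto)
  with \<open>c > 0\<close> show False by simp
qed

lemma slope_has_derivative: "d < x \<Longrightarrow> ((\<lambda>s. u s / s) has_real_derivative - intercept x / x\<^sup>2) (at x)"
  using d_nonneg
  by (auto intro!: derivative_eq_intros u_deriv simp: intercept_def power2_eq_square field_simps)

lemma slope_antimono:
  assumes "d < a" and "a \<le> b"
  shows "u b / b \<le> u a / a"
proof (rule DERIV_nonpos_imp_nonincreasing[OF \<open>a \<le> b\<close>])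
  fix x assume "a \<le> x" "x \<le> b"
  then have "d < x" using assms by simp
  then have "- intercept x / x\<^sup>2 \<le> 0"
    using intercept_nonneg by simp
  with slope_has_derivative[OF \<open>d < x\<close>]
  show "\<exists>l. ((\<lambda>s. u s / s) has_real_derivative l) (at x) \<and> l \<le> 0"
    by blast
qed

lemma intercept_not_eventually_ge_quadratic:
  assumes "c > 0"
  shows "\<not> (\<forall>\<^sub>F s in at_top. c * s\<^sup>2 \<le> intercept s)"
proof
  assume "\<forall>\<^sub>F s in at_top. c * s\<^sup>2 \<le> intercept s"
  then obtain S where S: "\<And>s. S \<le> s \<Longrightarrow> c * s\<^sup>2 \<le> intercept s"
    by (auto simp: eventually_at_top_linorder)
  have "\<exists>x\<ge>max S (d + 1). u x / x \<le> 0"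
  proof (rule derivative_le_neg_imp_nonpos[OF \<open>c > 0\<close>])
    fix x assume x: "max S (d + 1) \<le> x"
    then have "d < x" and "0 < x" using d_nonneg by auto
    show "((\<lambda>s. u s / s) has_real_derivative - intercept x / x\<^sup>2) (at x)"
      using slope_has_derivative[OF \<open>d < x\<close>] .
    show "- intercept x / x\<^sup>2 \<le> - c"
      using S[of x] x \<open>0 < x\<close> by (simp add: field_simps)
  qed
  then obtain x where "max S (d + 1) \<le> x" "u x / x \<le> 0"
    by blast
  moreover have "d < x" "0 < x"
    using \<open>max S (d + 1) \<le> x\<close> d_nonneg by auto
  ultimately show False
    using u_pos[of x] by (simp add: divide_le_0_iff)
qed

lemma intercept_ge_if_weighted_intercept_ge:
  assumes "d < t" and "t \<le> s" and "\<epsilon> \<le> weighted_intercept t s"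
  shows "2 * (real n - 1) * \<epsilon> * exp ((s\<^sup>2 - t\<^sup>2) / 4) \<le> intercept s"
proof -
  have "2 * (real n - 1) * \<epsilon> \<le> intercept s * weight t s"
    using assms(3) n_minus_1_pos by (simp add: weighted_intercept_def field_simps)
  also have "\<dots> \<le> intercept s * exp (- (s\<^sup>2 - t\<^sup>2) / 4)"
    using weight_le[OF assms(1,2)] intercept_nonneg[of s] assms(1,2)
    by (intro mult_left_mono) auto
  finally have "2 * (real n - 1) * \<epsilon> * exp ((s\<^sup>2 - t\<^sup>2) / 4)
      \<le> intercept s * exp (- (s\<^sup>2 - t\<^sup>2) / 4) * exp ((s\<^sup>2 - t\<^sup>2) / 4)"
    by (rule mult_right_mono) simp
  then show ?thesis
    by (simp add: mult.assoc flip: exp_add add_divide_distrib)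
qed

lemma weighted_intercept_tendsto_0:
  assumes "d < t"
  shows "(weighted_intercept t \<longlongrightarrow> 0) at_top"
proof (rule decreasing_tendsto)
  show "\<forall>\<^sub>F s in at_top. 0 \<le> weighted_intercept t s"
    using eventually_gt_at_top[of t] proof eventually_elim
    case (elim s)
    then show ?case
      using assms intercept_nonneg[of s] weight_pos[of t s] n_minus_1_pos
      by (simp add: weighted_intercept_def)
  qed
next
  fix \<epsilon> :: real assume "0 < \<epsilon>"
  show "\<forall>\<^sub>F s in at_top. weighted_intercept t s < \<epsilon>"
  proof (rule ccontr)
    assume small_never: "\<not> (\<forall>\<^sub>F s in at_top. weighted_intercept t s < \<epsilon>)"
    have large: "\<epsilon> \<le> weighted_intercept t s" if "t \<le> s" for s
    proof (rule ccontr)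
      assume "\<not> \<epsilon> \<le> weighted_intercept t s"
      have "\<forall>\<^sub>F s' in at_top. weighted_intercept t s' < \<epsilon>"
        using eventually_ge_at_top[of s] proof eventually_elim
        case (elim s')
        then show ?case
          using weighted_intercept_antimono[OF assms that elim] \<open>\<not> \<epsilon> \<le> weighted_intercept t s\<close>
          by simp
      qed
      with small_never show False ..
    qed
    define N where "N = 2 * (real n - 1)"
    have "N > 0" using n_minus_1_pos by (simp add: N_def)
    have "\<forall>\<^sub>F s in at_top. s\<^sup>2 \<le> exp ((s\<^sup>2 - t\<^sup>2) / 4)"
      by real_asymp
    with eventually_ge_at_top[of t]
    have "\<forall>\<^sub>F s in at_top. \<epsilon> * N * s\<^sup>2 \<le> intercept s"
    proof eventually_elim
      case (elim s)
      have "\<epsilon> * N * s\<^sup>2 \<le> \<epsilon> * N * exp ((s\<^sup>2 - t\<^sup>2) / 4)"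
        using elim(2) \<open>0 < \<epsilon>\<close> \<open>N > 0\<close> by (intro mult_left_mono) auto
      also have "\<dots> \<le> intercept s"
        using intercept_ge_if_weighted_intercept_ge[OF assms elim(1) large[OF elim(1)]]
        by (simp add: N_def mult.assoc mult.left_commute)
      finally show ?case .
    qed
    with intercept_not_eventually_ge_quadratic[of "\<epsilon> * N"] \<open>0 < \<epsilon>\<close> \<open>N > 0\<close>
    show False by simp
  qed
qed

lemma density_has_integral:
  assumes "d < t"
  shows "(density t has_integral intercept t / (2 * (real n - 1))) {t..}"
proof -
  have "(density t has_integral (0 - (- weighted_intercept t t))) {t..}"
  proof (rule has_integral_atLeast_of_derivative[where G = "\<lambda>s. - weighted_intercept t s"])
    show "continuous_on {t..b} (\<lambda>s. - weighted_intercept t s)" for b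
      using continuous_on_weighted_intercept[OF assms] by (intro continuous_intros)
    show "((\<lambda>s. - weighted_intercept t s) has_real_derivative density t x) (at x)" if "t < x" for x
      using DERIV_minus[OF weighted_intercept_has_derivative[OF assms that]] by simp
    show "0 \<le> density t x" if "t \<le> x" for x
      using density_pos[OF assms that] by simp
    show "((\<lambda>s. - weighted_intercept t s) \<longlongrightarrow> 0) at_top"
      using tendsto_minus[OF weighted_intercept_tendsto_0[OF assms]] by simp
  qed
  then show ?thesis by (simp add: weighted_intercept_def weight_self)
qed

lemma slope_tendsto: "\<exists>\<sigma>\<ge>0. ((\<lambda>s. u s / s) \<longlongrightarrow> \<sigma>) at_top"
proof (intro exI conjI)
  define \<sigma> where "\<sigma> = Inf ((\<lambda>s. u s / s) ` {d<..})"
  have slope_pos: "0 < u s / s" if "d < s" for s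
    using u_pos[OF that] that d_nonneg by simp
  have bdd: "bdd_below ((\<lambda>s. u s / s) ` {d<..})"
    using slope_pos by (intro bdd_belowI[of _ 0]) (auto intro: less_imp_le)
  show "0 \<le> \<sigma>"
    unfolding \<sigma>_def using slope_pos by (intro cInf_greatest) (auto intro: less_imp_le)
  show "((\<lambda>s. u s / s) \<longlongrightarrow> \<sigma>) at_top"
  proof (rule decreasing_tendsto)
    show "\<forall>\<^sub>F s in at_top. \<sigma> \<le> u s / s"
      using eventually_gt_at_top[of d] by eventually_elim (use bdd in \<open>auto simp: \<sigma>_def intro: cInf_lower\<close>)
  next
    fix a assume "\<sigma> < a"
    then obtain y where "d < y" "u y / y < a"
      unfolding \<sigma>_def by (subst (asm) cInf_less_iff[OF _ bdd]) auto
    show "\<forall>\<^sub>F s in at_top. u s / s < a"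
      using eventually_ge_at_top[of y] proof eventually_elim
      case (elim s)
      then show ?case
        using slope_antimono[OF \<open>d < y\<close> elim] \<open>u y / y < a\<close> by simp
    qed
  qed
qed

lemma intercept_over_square_has_integral:
  assumes "d < x" and slope_lim: "((\<lambda>s. u s / s) \<longlongrightarrow> \<sigma>) at_top"
  shows "((\<lambda>t. intercept t / t\<^sup>2) has_integral (u x / x - \<sigma>)) {x..}"
proof -
  have "((\<lambda>t. intercept t / t\<^sup>2) has_integral (- \<sigma> - (- (u x / x)))) {x..}"
  proof (rule has_integral_atLeast_of_derivative[where G = "\<lambda>s. - (u s / s)"])
    have "continuous_on {x..b} (\<lambda>s. u s / s)" for b
      by (intro continuous_at_imp_continuous_on ballI DERIV_isCont[OF slope_has_derivative])
        (use assms in auto)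
    then show "continuous_on {x..b} (\<lambda>s. - (u s / s))" for b
      by (rule continuous_on_minus)
    show "((\<lambda>s. - (u s / s)) has_real_derivative intercept y / y\<^sup>2) (at y)" if "x < y" for y
      using DERIV_minus[OF slope_has_derivative[of y]] that \<open>d < x\<close> by simp
    show "0 \<le> intercept y / y\<^sup>2" if "x \<le> y" for y
      using intercept_nonneg[of y] that \<open>d < x\<close> by simp
    show "((\<lambda>s. - (u s / s)) \<longlongrightarrow> - \<sigma>) at_top"
      by (rule tendsto_minus[OF slope_lim])
  qed
  then show ?thesis by simp
qed

theorem integral_representation:
  "\<exists>\<sigma>\<ge>0. (\<forall>t>d. density t integrable_on {t..}) \<and>
     (\<forall>x>d. (\<lambda>t. 1 / t\<^sup>2 * integral {t..} (density t)) integrable_on {x..} \<and>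
        u x = 2 * (real n - 1) * x * integral {x..} (\<lambda>t. 1 / t\<^sup>2 * integral {t..} (density t))
          + \<sigma> * x)"
proof -
  obtain \<sigma> where "0 \<le> \<sigma>" and slope_lim: "((\<lambda>s. u s / s) \<longlongrightarrow> \<sigma>) at_top"
    using slope_tendsto by blast
  define N where "N = 2 * (real n - 1)"
  have "N > 0" using n_minus_1_pos by (simp add: N_def)
  have outer: "((\<lambda>t. 1 / t\<^sup>2 * integral {t..} (density t)) has_integral 1 / N * (u x / x - \<sigma>)) {x..}"
    if "d < x" for x
  proof -
    have "1 / t\<^sup>2 * integral {t..} (density t) = 1 / N * (intercept t / t\<^sup>2)" if "t \<in> {x..}" for t
      using integral_unique[OF density_has_integral[of t]] that \<open>d < x\<close> by (simp add: N_def)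
    moreover have "((\<lambda>t. 1 / N * (intercept t / t\<^sup>2)) has_integral 1 / N * (u x / x - \<sigma>)) {x..}"
      by (rule has_integral_mult_right[OF intercept_over_square_has_integral[OF \<open>d < x\<close> slope_lim]])
    ultimately show ?thesis
      by (subst has_integral_cong) auto
  qed
  show ?thesis
  proof (intro exI conjI allI impI)
    show "0 \<le> \<sigma>" by fact
    show "density t integrable_on {t..}" if "d < t" for t
      using density_has_integral[OF that] by blast
    fix x assume "d < x"
    show "(\<lambda>t. 1 / t\<^sup>2 * integral {t..} (density t)) integrable_on {x..}"
      using outer[OF \<open>d < x\<close>] by blast
    have "0 < x" using \<open>d < x\<close> d_nonneg by simp
    then show "u x = 2 * (real n - 1) * x * integral {x..} (\<lambda>t. 1 / t\<^sup>2 * integral {t..} (density t))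
          + \<sigma> * x"
      using integral_unique[OF outer[OF \<open>d < x\<close>]] \<open>N > 0\<close>
      by (simp add: N_def field_simps)
  qed
qed

end

theorem lemma2:
  fixes n :: nat and d :: real and u u' u'' :: "real \<Rightarrow> real"
  assumes "n \<ge> 2" and "d \<ge> 0"
    and pos: "\<And>x. x > d \<Longrightarrow> u x > 0"
    and d1: "\<And>x. x > d \<Longrightarrow> (u has_real_derivative u' x) (at x)"
    and d2: "\<And>x. x > d \<Longrightarrow> (u' has_real_derivative u'' x) (at x)"
    and ode: "\<And>x. x > d \<Longrightarrow>
       u'' x = ((x * u' x - u x) / 2 + (real n - 1) / u x) * (1 + (u' x)\<^sup>2)"
  shows "\<exists>\<sigma>::real. \<sigma> \<ge> 0 \<and>
    (\<forall>t>d. (\<lambda>s. s / 2 * ((1 + (u' s)\<^sup>2) / u s) *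
                exp (- (1/2) * integral {t..s} (\<lambda>z. z * (1 + (u' z)\<^sup>2))))
              integrable_on {t..}) \<and>
    (\<forall>x>d. (\<lambda>t. 1 / t\<^sup>2 *
              integral {t..} (\<lambda>s. s / 2 * ((1 + (u' s)\<^sup>2) / u s) *
                exp (- (1/2) * integral {t..s} (\<lambda>z. z * (1 + (u' z)\<^sup>2)))))
            integrable_on {x..} \<and>
       u x = 2 * (real n - 1) * x *
         integral {x..} (\<lambda>t. 1 / t\<^sup>2 *
              integral {t..} (\<lambda>s. s / 2 * ((1 + (u' s)\<^sup>2) / u s) *
                exp (- (1/2) * integral {t..s} (\<lambda>z. z * (1 + (u' z)\<^sup>2)))))
         + \<sigma> * x)"
proof -
  interpret shrinker_profile n d u u' u''
    by unfold_locales (use assms in auto)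
  show ?thesis
    using integral_representation unfolding density_def[abs_def] weight_def .
qed

end
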